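(* Let $f_1,f_2,\dots$ be frog model statistics with values in $[0,\infty]$ and let $f=\sum_{i=1}^\infty f_i$. If all $f_i$ are icv statistics, then $f$ is an icv statistic; if all $f_i$ are pgf statistics, then $f$ is a pgf statistic.
   Context: Frog model: $G$ countable with root $\emptyset$; $(\eta,S)$ consists of counts $\eta(v)\in\{0,1,\dots\}$ for $v\ne\emptyset$ and paths $S_\cdot(v,i)$ with $S_0(v,i)=v$; one active frog starts at $\emptyset$; sleeping frogs activate when an active frog visits their vertex, then follow their paths. $\sigma_{P_\cdot}(\eta,S)$: add an extra frog with path $P_\cdot$ at $P_0$ (nonroot). $\Delta_{P_\cdot}f(\eta,S)=f(\sigma_{P_\cdot}(\eta,S))-f(\eta,S)$. $f$ is an icv statistic if for all $(\eta,S)$ and paths $P^1_\cdot,\dots,P^m_\cdot$ with a common start: (i) for $m=1,2$, $(-1)^m\Delta_{P^1_\cdot}\cdots\Delta_{P^m_\cdot}f(\eta,S)\le0$ whenever all values $f(\sigma_{P^{u_1}_\cdot}\cdots\sigma_{P^{u_j}_\cdot}(\eta,S))$, $\{u_1,\dots,u_j\}\subseteq\{1,\dots,m\}$, are finite; (ii) $f(\eta,S)=\infty\Rightarrow f(\sigma_{P^1_\cdot}(\eta,S))=\infty$; (iii) $f(\sigma_{P^1_\cdot}\sigma_{P^2_\cdot}(\eta,S))=\infty\Rightarrow f(\sigma_{P^i_\cdot}(\eta,S))=\infty$ for $i=1$ or $2$. $f$ is a pgf statistic if (ii),(iii) hold and (i) holds for all $m\ge1$. *)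

theory Defs
  imports "HOL-Library.Extended_Nonnegative_Real" "HOL-Library.Countable"
begin

text \<open>A configuration is a pair (eta, S): eta v is the number of
  sleeping frogs at v, and S v i is the path of the i-th frog at v (0-based index i).\<close>

type_synonym 'v path = "nat \<Rightarrow> 'v"
type_synonym 'v config = "('v \<Rightarrow> nat) \<times> ('v \<Rightarrow> nat \<Rightarrow> 'v path)"

definition valid_config :: "'v \<Rightarrow> 'v config \<Rightarrow> bool" where
  "valid_config rt c \<longleftrightarrow> fst c rt = 0 \<and> (\<forall>v i. snd c v i 0 = v)"

definition add_frog :: "'v path \<Rightarrow> 'v config \<Rightarrow> 'v config" where
  "add_frog P c = (case c of (eta, S) \<Rightarrow>
      (eta(P 0 := Suc (eta (P 0))), S(P 0 := (S (P 0))(eta (P 0) := P))))"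

fun add_frogs :: "'v path list \<Rightarrow> 'v config \<Rightarrow> 'v config" where
  "add_frogs [] c = c"
| "add_frogs (P # Ps) c = add_frogs Ps (add_frog P c)"

fun frog_diff :: "'v path list \<Rightarrow> ('v config \<Rightarrow> real) \<Rightarrow> 'v config \<Rightarrow> real" where
  "frog_diff [] g c = g c"
| "frog_diff (P # Ps) g c = frog_diff Ps g (add_frog P c) - frog_diff Ps g c"

definition diff_cond :: "'v \<Rightarrow> ('v config \<Rightarrow> ennreal) \<Rightarrow> nat \<Rightarrow> bool" where
  "diff_cond rt f m \<longleftrightarrow>
     (\<forall>c Ps. valid_config rt c \<and> length Ps = m
        \<and> (\<forall>P\<in>set Ps. P 0 \<noteq> rt) \<and> (\<forall>P\<in>set Ps. \<forall>Q\<in>set Ps. P 0 = Q 0)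
        \<and> (\<forall>us\<in>set (subseqs Ps). f (add_frogs us c) \<noteq> \<infinity>)
        \<longrightarrow> (-1) ^ m * frog_diff Ps (\<lambda>x. enn2real (f x)) c \<le> 0)"

definition infinity_conds :: "'v \<Rightarrow> ('v config \<Rightarrow> ennreal) \<Rightarrow> bool" where
  "infinity_conds rt f \<longleftrightarrow>
     (\<forall>c P. valid_config rt c \<and> P 0 \<noteq> rt \<and> f c = \<infinity> \<longrightarrow> f (add_frog P c) = \<infinity>)
   \<and> (\<forall>c P Q. valid_config rt c \<and> P 0 \<noteq> rt \<and> Q 0 = P 0
        \<and> f (add_frog P (add_frog Q c)) = \<infinity>
        \<longrightarrow> f (add_frog P c) = \<infinity> \<or> f (add_frog Q c) = \<infinity>)"

definition icv_statistic :: "'v \<Rightarrow> ('v config \<Rightarrow> ennreal) \<Rightarrow> bool" where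
  "icv_statistic rt f \<longleftrightarrow> diff_cond rt f 1 \<and> diff_cond rt f 2 \<and> infinity_conds rt f"

definition pgf_statistic :: "'v \<Rightarrow> ('v config \<Rightarrow> ennreal) \<Rightarrow> bool" where
  "pgf_statistic rt f \<longleftrightarrow> (\<forall>m\<ge>1. diff_cond rt f m) \<and> infinity_conds rt f"

end

theory Submission
  imports Defs
begin

text \<open>Where all the values f(sigma_U c) entering an m-fold difference of f = \<Sum>i f_i are
  finite, so are those of every f_i, the real parts are summable, and the difference operator,
  being linear, commutes with the series; so the sign condition (i) passes to f as a limit of
  sums of terms of the same sign. Conditions (ii) and (iii) need only monotonicity and
  subadditivity of each f_i under adding frogs, which are (i) for m = 1 and m = 2 once infinite
  values are excluded by (ii) and (iii) for f_i; both properties survive summation in [0, \<infinity>].\<close>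

lemma ennreal_suminf_neq_top_imp_neq_top:
  fixes f :: "nat \<Rightarrow> ennreal"
  shows "(\<Sum>i. f i) \<noteq> \<infinity> \<Longrightarrow> f i \<noteq> \<infinity>"
  using ennreal_suminf_lessD[of f top] by (simp add: less_top)

lemma enn2real_sums_suminf:
  fixes f :: "nat \<Rightarrow> ennreal"
  assumes "(\<Sum>i. f i) \<noteq> \<infinity>"
  shows "(\<lambda>i. enn2real (f i)) sums enn2real (\<Sum>i. f i)"
proof -
  have "f i < top" for i
    using assms ennreal_suminf_neq_top_imp_neq_top by (simp add: less_top)
  then have f_eq: "(\<lambda>i. ennreal (enn2real (f i))) = f" by simp
  then have "summable (\<lambda>i. enn2real (f i))"
    using assms summable_suminf_not_top[of "\<lambda>i. enn2real (f i)"] by simp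
  moreover have "(\<Sum>i. f i) = ennreal (\<Sum>i. enn2real (f i))"
    using assms suminf_ennreal[of "\<lambda>i. enn2real (f i)"] by (simp add: f_eq)
  ultimately show ?thesis by (simp add: summable_sums suminf_nonneg)
qed

lemma frog_diff_sums:
  assumes "\<And>us. us \<in> set (subseqs Ps) \<Longrightarrow> (\<lambda>i. g i (add_frogs us c)) sums G (add_frogs us c)"
  shows "(\<lambda>i. frog_diff Ps (g i) c) sums frog_diff Ps G c"
  using assms
proof (induction Ps arbitrary: c)
  case Nil
  then show ?case by simp
next
  case (Cons P Ps)
  have "(\<lambda>i. frog_diff Ps (g i) (add_frog P c)) sums frog_diff Ps G (add_frog P c)"
  proof (rule Cons.IH)
    fix us assume "us \<in> set (subseqs Ps)"
    then have "P # us \<in> set (subseqs (P # Ps))" by (simp add: Let_def)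
    then show "(\<lambda>i. g i (add_frogs us (add_frog P c))) sums G (add_frogs us (add_frog P c))"
      using Cons.prems by fastforce
  qed
  moreover have "(\<lambda>i. frog_diff Ps (g i) c) sums frog_diff Ps G c"
    using Cons.prems by (intro Cons.IH) (auto simp: Let_def)
  ultimately show ?case using sums_diff by fastforce
qed

lemma diff_condD:
  assumes "diff_cond rt f (length Ps)" "valid_config rt c"
    "\<And>P. P \<in> set Ps \<Longrightarrow> P 0 \<noteq> rt" "\<And>P Q. P \<in> set Ps \<Longrightarrow> Q \<in> set Ps \<Longrightarrow> P 0 = Q 0"
    "\<And>us. us \<in> set (subseqs Ps) \<Longrightarrow> f (add_frogs us c) \<noteq> \<infinity>"
  shows "(-1) ^ length Ps * frog_diff Ps (\<lambda>x. enn2real (f x)) c \<le> 0"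
  using assms unfolding diff_cond_def by blast

lemma diff_cond_1_mono:
  assumes "diff_cond rt f 1" "infinity_conds rt f" "valid_config rt c" "P 0 \<noteq> rt"
  shows "f c \<le> f (add_frog P c)"
proof (cases "f (add_frog P c) = \<infinity>")
  case False
  then have "f c \<noteq> \<infinity>"
    using assms(2-4) unfolding infinity_conds_def by blast
  have "(-1) ^ length [P] * frog_diff [P] (\<lambda>x. enn2real (f x)) c \<le> 0"
    by (rule diff_condD) (use assms False \<open>f c \<noteq> \<infinity>\<close> in auto)
  then have "enn2real (f c) \<le> enn2real (f (add_frog P c))" by simp
  then have "ennreal (enn2real (f c)) \<le> ennreal (enn2real (f (add_frog P c)))"
    by (rule ennreal_leI)
  with \<open>f c \<noteq> \<infinity>\<close> False show ?thesis by (simp add: less_top)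
qed simp

lemma diff_cond_2_subadditive:
  assumes "diff_cond rt f 2" "infinity_conds rt f" "valid_config rt c" "P 0 \<noteq> rt" "Q 0 = P 0"
    and finite: "f c \<noteq> \<infinity>" "f (add_frog P c) \<noteq> \<infinity>" "f (add_frog Q c) \<noteq> \<infinity>"
  shows "f (add_frog P (add_frog Q c)) \<le> f (add_frog P c) + f (add_frog Q c)"
proof -
  have PQ_finite: "f (add_frog P (add_frog Q c)) \<noteq> \<infinity>"
    using assms(2-5) finite unfolding infinity_conds_def by blast
  have "(-1) ^ length [Q, P] * frog_diff [Q, P] (\<lambda>x. enn2real (f x)) c \<le> 0"
    by (rule diff_condD) (use assms PQ_finite in \<open>auto simp: Let_def numeral_2_eq_2\<close>)
  then have "enn2real (f (add_frog P (add_frog Q c))) + enn2real (f c)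
      \<le> enn2real (f (add_frog P c)) + enn2real (f (add_frog Q c))" by simp
  then have "enn2real (f (add_frog P (add_frog Q c)))
      \<le> enn2real (f (add_frog P c)) + enn2real (f (add_frog Q c))"
    using enn2real_nonneg[of "f c"] by linarith
  then have "ennreal (enn2real (f (add_frog P (add_frog Q c))))
      \<le> ennreal (enn2real (f (add_frog P c))) + ennreal (enn2real (f (add_frog Q c)))"
    by (simp add: ennreal_leI flip: ennreal_plus)
  then show ?thesis
    using PQ_finite finite by (simp add: less_top)
qed

lemma diff_cond_suminf:
  assumes "\<And>i. diff_cond rt (fs i) m"
  shows "diff_cond rt (\<lambda>c. \<Sum>i. fs i c) m"
  unfolding diff_cond_def
proof (intro allI impI, elim conjE)
  fix c Ps
  assume valid: "valid_config rt c" and len: "length Ps = m"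
    and nonroot: "\<forall>P\<in>set Ps. P 0 \<noteq> rt" and start: "\<forall>P\<in>set Ps. \<forall>Q\<in>set Ps. P 0 = Q 0"
    and finite: "\<forall>us\<in>set (subseqs Ps). (\<Sum>i. fs i (add_frogs us c)) \<noteq> \<infinity>"
  let ?d = "\<lambda>i. (-1) ^ m * frog_diff Ps (\<lambda>x. enn2real (fs i x)) c"
  have "?d sums ((-1) ^ m * frog_diff Ps (\<lambda>x. enn2real (\<Sum>i. fs i x)) c)"
    using finite by (intro sums_mult frog_diff_sums enn2real_sums_suminf) blast
  moreover have "?d i \<le> 0" for i
  proof -
    have "fs i (add_frogs us c) \<noteq> \<infinity>" if "us \<in> set (subseqs Ps)" for us
      using finite that ennreal_suminf_neq_top_imp_neq_top by blast
    then show ?thesis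
      using diff_condD[of rt "fs i" Ps c] assms valid len nonroot start by blast
  qed
  ultimately show "(-1) ^ m * frog_diff Ps (\<lambda>x. enn2real (\<Sum>i. fs i x)) c \<le> 0"
    using sums_le[OF _ _ sums_zero, of ?d] by simp
qed

lemma infinity_conds_suminf:
  assumes mono: "\<And>i. diff_cond rt (fs i) 1" and subadd: "\<And>i. diff_cond rt (fs i) 2"
    and inf: "\<And>i. infinity_conds rt (fs i)"
  shows "infinity_conds rt (\<lambda>c. \<Sum>i. fs i c)"
  unfolding infinity_conds_def
proof (intro conjI allI impI; elim conjE)
  fix c and P :: "'a path"
  assume valid: "valid_config rt c" and P: "P 0 \<noteq> rt" and c_inf: "(\<Sum>i. fs i c) = \<infinity>"
  have "fs i c \<le> fs i (add_frog P c)" for i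
    using mono[of i] inf[of i] valid P by (rule diff_cond_1_mono)
  then have "(\<Sum>i. fs i c) \<le> (\<Sum>i. fs i (add_frog P c))"
    by (intro suminf_le summableI)
  then show "(\<Sum>i. fs i (add_frog P c)) = \<infinity>"
    using c_inf by (simp add: top_unique)
next
  fix c and P Q :: "'a path"
  assume valid: "valid_config rt c" and P: "P 0 \<noteq> rt" and Q: "Q 0 = P 0"
    and PQ_inf: "(\<Sum>i. fs i (add_frog P (add_frog Q c))) = \<infinity>"
  show "(\<Sum>i. fs i (add_frog P c)) = \<infinity> \<or> (\<Sum>i. fs i (add_frog Q c)) = \<infinity>"
  proof (rule ccontr)
    assume "\<not> ?thesis"
    then have P_fin: "(\<Sum>i. fs i (add_frog P c)) \<noteq> \<infinity>"
      and Q_fin: "(\<Sum>i. fs i (add_frog Q c)) \<noteq> \<infinity>" by auto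
    have "fs i (add_frog P (add_frog Q c)) \<le> fs i (add_frog P c) + fs i (add_frog Q c)" for i
    proof -
      have "fs i (add_frog P c) \<noteq> \<infinity>" "fs i (add_frog Q c) \<noteq> \<infinity>"
        using P_fin Q_fin ennreal_suminf_neq_top_imp_neq_top by blast+
      moreover have "fs i c \<le> fs i (add_frog P c)"
        using mono[of i] inf[of i] valid P by (rule diff_cond_1_mono)
      with calculation(1) have "fs i c \<noteq> \<infinity>"
        by (metis infinity_ennreal_def neq_top_trans)
      ultimately show ?thesis
        using diff_cond_2_subadditive[of rt "fs i" c P Q] subadd inf valid P Q by blast
    qed
    then have "(\<Sum>i. fs i (add_frog P (add_frog Q c)))
        \<le> (\<Sum>i. fs i (add_frog P c) + fs i (add_frog Q c))"
      by (intro suminf_le summableI)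
    also have "\<dots> = (\<Sum>i. fs i (add_frog P c)) + (\<Sum>i. fs i (add_frog Q c))"
      by (intro suminf_add[symmetric] summableI)
    finally have "(\<Sum>i. fs i (add_frog P (add_frog Q c)))
        \<le> (\<Sum>i. fs i (add_frog P c)) + (\<Sum>i. fs i (add_frog Q c))" .
    moreover have "(\<Sum>i. fs i (add_frog P c)) + (\<Sum>i. fs i (add_frog Q c)) \<noteq> \<infinity>"
      using P_fin Q_fin by simp
    ultimately show False
      using PQ_inf by (metis infinity_ennreal_def neq_top_trans)
  qed
qed

theorem lemma20:
  fixes rt :: "'v::countable"
    and fs :: "nat \<Rightarrow> 'v config \<Rightarrow> ennreal"
  shows "((\<forall>i. icv_statistic rt (fs i)) \<longrightarrow> icv_statistic rt (\<lambda>c. \<Sum>i. fs i c))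
       \<and> ((\<forall>i. pgf_statistic rt (fs i)) \<longrightarrow> pgf_statistic rt (\<lambda>c. \<Sum>i. fs i c))"
proof (intro conjI impI)
  assume "\<forall>i. icv_statistic rt (fs i)"
  then have "diff_cond rt (fs i) 1" "diff_cond rt (fs i) 2" "infinity_conds rt (fs i)" for i
    unfolding icv_statistic_def by simp_all
  then show "icv_statistic rt (\<lambda>c. \<Sum>i. fs i c)"
    unfolding icv_statistic_def by (blast intro: diff_cond_suminf infinity_conds_suminf)
next
  assume "\<forall>i. pgf_statistic rt (fs i)"
  then have "m \<ge> 1 \<Longrightarrow> diff_cond rt (fs i) m" "infinity_conds rt (fs i)" for i m
    unfolding pgf_statistic_def by simp_all
  then show "pgf_statistic rt (\<lambda>c. \<Sum>i. fs i c)"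
    unfolding pgf_statistic_def by (simp add: diff_cond_suminf infinity_conds_suminf)
qed

end
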